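(* Fix a policy $\pi$ with information set $\mathcal{I}$ in a finite-horizon POMDP $\mathcal{M}$ with $S$ states and $O$ observations, and let beliefs be computed as described in the context. For each state trajectory $\tau_{\mathcal{S}}$ with $p^\pi(\tau_{\mathcal{S}})>0$ define $$\mathbb{P}(\mathcal{T}_{\mathcal{O}}\mid\tau_{\mathcal{S}})=\sum_{\tau_{\mathcal{O}}:\,H(d(\tau_{\mathcal{O}}))\ge H(d(\tau_{\mathcal{S}}))}p^\pi(\tau_{\mathcal{O}}\mid\tau_{\mathcal{S}}),\qquad J^{\mathcal{O}}(\pi\mid\tau_{\mathcal{S}})=\mathbb{E}_{\tau_{\mathcal{O}}\sim p^\pi(\cdot\mid\tau_{\mathcal{S}})}[H(d(\tau_{\mathcal{O}}))],$$ $$\bar p_{\mathcal{S}}(\tau_{\mathcal{S}})=\mathbb{E}_{\tau_{\mathcal{B}}\sim p^\pi(\cdot\mid\tau_{\mathcal{S}})}\Big[\sum_{\tau_{\tilde{\mathcal{S}}}:\,H(d(\tau_{\tilde{\mathcal{S}}}))\ge H(d(\tau_{\mathcal{S}}))}\ \prod_{t=1}^T\bm{b}_t(\tilde s_t)\Big],\qquad \tilde J(\pi\mid\tau_{\mathcal{S}})=\mathbb{E}_{\tau_{\mathcal{B}}\sim p^\pi(\cdot\mid\tau_{\mathcal{S}})}\mathbb{E}_{\tau_{\tilde{\mathcal{S}}}\sim p(\cdot\mid\tau_{\mathcal{B}})}[H(d(\tau_{\tilde{\mathcal{S}}}))].$$ Assume $0<\mathbb{P}(\mathcal{T}_{\mathcal{O}}\mid\tau_{\mathcal{S}})<1$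 and $0<\bar p_{\mathcal{S}}(\tau_{\mathcal{S}})<1$ for all such $\tau_{\mathcal{S}}$. Then, with $J^{\mathcal{S}}(\pi)=\mathbb{E}_{\tau_{\mathcal{S}}\sim p^\pi}[H(d(\tau_{\mathcal{S}}))]$, $$\mathbb{E}_{\tau_{\mathcal{S}}\sim p^\pi}\Big[\frac{J^{\mathcal{O}}(\pi\mid\tau_{\mathcal{S}})-\mathbb{P}(\mathcal{T}_{\mathcal{O}}\mid\tau_{\mathcal{S}})\log O}{1-\mathbb{P}(\mathcal{T}_{\mathcal{O}}\mid\tau_{\mathcal{S}})}\Big]\le J^{\mathcal{S}}(\pi)\le\mathbb{E}_{\tau_{\mathcal{S}}\sim p^\pi}\Big[\frac{J^{\mathcal{O}}(\pi\mid\tau_{\mathcal{S}})}{\mathbb{P}(\mathcal{T}_{\mathcal{O}}\mid\tau_{\mathcal{S}})}\Big],$$ and $$\mathbb{E}_{\tau_{\mathcal{S}}\sim p^\pi}\Big[\frac{\tilde J(\pi\mid\tau_{\mathcal{S}})-\bar p_{\mathcal{S}}(\tau_{\mathcal{S}})\log S}{1-\bar p_{\mathcal{S}}(\tau_{\mathcal{S}})}\Big]\le J^{\mathcal{S}}(\pi)\le\mathbb{E}_{\tau_{\mathcal{S}}\sim p^\pi}\Big[\frac{\tilde J(\pi\mid\tau_{\mathcal{S}})}{\bar p_{\mathcal{S}}(\tau_{\mathcal{S}})}\Big].$$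
   Context: A finite-horizon POMDP $\mathcal{M}=(\mathcal{S},\mathcal{A},\mathcal{O},\mathbb{P},\mathbb{O},T,\mu)$ has finite state set ($S=|\mathcal{S}|$), action set, observation set ($O=|\mathcal{O}|$), transition kernel $\mathbb{P}$, observation kernel $\mathbb{O}$, horizon $T$, initial distribution $\mu$. Under a policy $\pi:\mathcal{I}\to\Delta(\mathcal{A})$: $s_1\sim\mu$, $o_t\sim\mathbb{O}(\cdot\mid s_t)$, and for $t<T$, $a_t\sim\pi(\cdot\mid i_t)$, $s_{t+1}\sim\mathbb{P}(\cdot\mid s_t,a_t)$, with $i_t$ a deterministic function of $(o_1,a_1,\dots,a_{t-1},o_t)$. Beliefs $\bm{b}_t\in\Delta(\mathcal{S})$ are deterministic functions of $(o_1,a_1,\dots,a_{t-1},o_t)$ (exact or approximate Bayesian beliefs), $\tau_{\mathcal{B}}=(\bm{b}_1,\dots,\bm{b}_T)$. $p^\pi$ is the law of the joint trajectory (state trajectory $\tau_{\mathcal{S}}=(s_1,\dots,s_T)$, observation trajectory $\tau_{\mathcal{O}}=(o_1,\dots,o_T)$, actions, beliefs), and $p^\pi(\cdot\mid\tau_{\mathcal{S}})$ denotes conditional laws given the state trajectory. A believed trajectory $\tau_{\tilde{\mathcal{S}}}=(\tilde s_1,\dots,\tilde s_T)\in\mathcal{S}^T$ is drawn given $\tau_{\mathcal{B}}$ with probability $p(\tau_{\tilde{\mathcal{S}}}\mid\tau_{\mathcal{B}})=\prod_t\bm{b}_t(\tilde s_t)$. For a sequence $x=(x_1,\dots,x_T)$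 over a finite set, $d(x)$ is its empirical distribution $d_y(x)=\frac1T\sum_t\mathbf{1}\{x_t=y\}$ and $H$ is Shannon entropy (natural log). *)

theory Defs
  imports "HOL-Probability.Probability"
begin

(* Finite-horizon POMDP.  States 's, actions 'a, observations 'o are finite types.
   Time is 0-indexed: t = 0 .. T-1 corresponds to t = 1 .. T in the paper. *)
record ('s, 'a, 'o) pomdp =
  init  :: "'s pmf"
  trans :: "'s \<Rightarrow> 'a \<Rightarrow> 's pmf"
  obsk  :: "'s \<Rightarrow> 'o pmf"
  hor   :: nat

definition trajs :: "nat \<Rightarrow> 'x list set" where
  "trajs n = {xs. length xs = n}"

(* information i_t = info t (o_1..o_t) (a_1..a_{t-1}); policy pi : I -> Delta(A).
   Probability mass of the joint trajectory (states ss, observations os, actions as). *)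
definition joint_prob ::
  "('s, 'a, 'o) pomdp \<Rightarrow> (nat \<Rightarrow> 'o list \<Rightarrow> 'a list \<Rightarrow> 'i) \<Rightarrow> ('i \<Rightarrow> 'a pmf)
     \<Rightarrow> 's list \<Rightarrow> 'o list \<Rightarrow> 'a list \<Rightarrow> real" where
  "joint_prob M info pol ss os as =
     pmf (init M) (ss ! 0)
     * (\<Prod>t<hor M. pmf (obsk M (ss ! t)) (os ! t))
     * (\<Prod>t<hor M - 1. pmf (pol (info t (take (Suc t) os) (take t as))) (as ! t)
                       * pmf (trans M (ss ! t) (as ! t)) (ss ! Suc t))"

definition state_prob ::
  "('s, 'a, 'o) pomdp \<Rightarrow> (nat \<Rightarrow> 'o list \<Rightarrow> 'a list \<Rightarrow> 'i) \<Rightarrow> ('i \<Rightarrow> 'a pmf)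
     \<Rightarrow> 's list \<Rightarrow> real" where
  "state_prob M info pol ss =
     (\<Sum>os\<in>trajs (hor M). \<Sum>as\<in>trajs (hor M - 1). joint_prob M info pol ss os as)"

definition cond_exp ::
  "('s, 'a, 'o) pomdp \<Rightarrow> (nat \<Rightarrow> 'o list \<Rightarrow> 'a list \<Rightarrow> 'i) \<Rightarrow> ('i \<Rightarrow> 'a pmf)
     \<Rightarrow> 's list \<Rightarrow> ('o list \<Rightarrow> 'a list \<Rightarrow> real) \<Rightarrow> real" where
  "cond_exp M info pol ss f =
     (\<Sum>os\<in>trajs (hor M). \<Sum>as\<in>trajs (hor M - 1). joint_prob M info pol ss os as * f os as)
     / state_prob M info pol ss"

definition belief_traj ::
  "nat \<Rightarrow> (nat \<Rightarrow> 'o list \<Rightarrow> 'a list \<Rightarrow> 's pmf) \<Rightarrow> 'o list \<Rightarrow> 'a list \<Rightarrow> 's pmf list" where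
  "belief_traj T bel os as = map (\<lambda>t. bel t (take (Suc t) os) (take t as)) [0..<T]"

definition believed_prob :: "'s pmf list \<Rightarrow> 's list \<Rightarrow> real" where
  "believed_prob bs sts = (\<Prod>t<length bs. pmf (bs ! t) (sts ! t))"

(* empirical distribution and Shannon entropy (natural log; 0 ln 0 = 0) *)
definition emp :: "'x list \<Rightarrow> 'x \<Rightarrow> real" where
  "emp xs y = real (count_list xs y) / real (length xs)"

definition entropy_fin :: "('x::finite \<Rightarrow> real) \<Rightarrow> real" where
  "entropy_fin d = - (\<Sum>y\<in>UNIV. d y * ln (d y))"

definition Hd :: "'x::finite list \<Rightarrow> real" where
  "Hd xs = entropy_fin (emp xs)"

definition P_TO where
  "P_TO M info pol ss =
     cond_exp M info pol ss (\<lambda>os as. if Hd os \<ge> Hd ss then 1 else 0)"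

definition J_O_cond where
  "J_O_cond M info pol ss = cond_exp M info pol ss (\<lambda>os as. Hd os)"

definition pbar_S where
  "pbar_S M info pol bel ss =
     cond_exp M info pol ss (\<lambda>os as.
        \<Sum>sts\<in>{sts\<in>trajs (hor M). Hd sts \<ge> Hd ss}.
           believed_prob (belief_traj (hor M) bel os as) sts)"

definition J_tilde_cond where
  "J_tilde_cond M info pol bel ss =
     cond_exp M info pol ss (\<lambda>os as.
        \<Sum>sts\<in>trajs (hor M). believed_prob (belief_traj (hor M) bel os as) sts * Hd sts)"

definition J_S where
  "J_S M info pol = (\<Sum>ss\<in>trajs (hor M). state_prob M info pol ss * Hd ss)"

definition E_S where
  "E_S M info pol g =
     (\<Sum>ss\<in>{ss\<in>trajs (hor M). state_prob M info pol ss > 0}. state_prob M info pol ss * g ss)"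

end

theory Submission
  imports Defs
begin

text \<open>
  Fix a state trajectory with entropy \<open>h\<close> and let \<open>X\<close> be a random entropy in \<open>[0, L]\<close>
  (observed entropy with \<open>L = ln O\<close>, or believed-trajectory entropy with \<open>L = ln S\<close>), and let \<open>P\<close>
  be the probability that \<open>X \<ge> h\<close>. Splitting \<open>E X\<close> according to this event gives
  \<open>h P \<le> E X \<le> L P + h (1 - P)\<close>, which for \<open>0 < P < 1\<close> solves to two-sided bounds on \<open>h\<close>.
  Averaging over the state trajectory turns them into bounds on \<open>J\<^sup>S\<close>.
\<close>

lemma finite_trajs [simp]: "finite (trajs n :: 'x::finite list set)"
  unfolding trajs_def using finite_lists_length_eq[of "UNIV :: 'x set" n] by simp

lemma trajs_Suc: "trajs (Suc n) = (\<lambda>(x, xs). x # xs) ` (UNIV \<times> trajs n)"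
  unfolding trajs_def by (auto simp: image_iff length_Suc_conv)

lemma nonempty_if_in_trajs: "xs \<in> trajs n \<Longrightarrow> 0 < n \<Longrightarrow> xs \<noteq> []"
  unfolding trajs_def by auto

lemma entropy_fin_nonneg:
  assumes "\<And>y. 0 \<le> d y" "\<And>y. d y \<le> 1"
  shows "0 \<le> entropy_fin d"
proof -
  have "d y * ln (d y) \<le> 0" for y
    using assms[of y] by (cases "d y = 0") (auto intro: mult_nonneg_nonpos)
  then show ?thesis
    unfolding entropy_fin_def by (simp add: sum_nonpos)
qed

lemma entropy_fin_le_ln_card:
  fixes d :: "'x::finite \<Rightarrow> real"
  assumes nonneg: "\<And>y. 0 \<le> d y" and sum1: "(\<Sum>y\<in>UNIV. d y) = 1"
  shows "entropy_fin d \<le> ln (real CARD('x))"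
proof -
  define n where "n = real CARD('x)"
  have n_pos: "n > 0" unfolding n_def by simp
  \<comment> \<open>Gibbs' inequality against the uniform distribution, via \<open>ln x \<le> x - 1\<close>\<close>
  have gibbs: "- d y * ln (d y) - d y * ln n \<le> 1 / n - d y" for y
  proof (cases "d y = 0")
    case False
    then have pos: "d y > 0" using nonneg[of y] by simp
    have "- d y * ln (d y) - d y * ln n = d y * ln (1 / (n * d y))"
      using pos n_pos by (simp add: ln_div ln_mult algebra_simps)
    also have "\<dots> \<le> d y * (1 / (n * d y) - 1)"
      using pos n_pos by (intro mult_left_mono ln_le_minus_one) auto
    also have "\<dots> = 1 / n - d y"
      using pos n_pos by (simp add: field_simps)
    finally show ?thesis .
  qed (use n_pos in simp)
  have "(\<Sum>y\<in>UNIV. - d y * ln (d y) - d y * ln n) \<le> (\<Sum>y\<in>(UNIV :: 'x set). 1 / n - d y)"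
    by (intro sum_mono gibbs)
  also have "\<dots> = 0"
    using sum1 n_pos unfolding n_def by (simp add: sum_subtractf)
  finally show ?thesis
    using sum1 unfolding entropy_fin_def n_def
    by (simp add: sum_subtractf sum_negf flip: sum_distrib_right)
qed

lemma emp_nonneg: "0 \<le> emp xs y"
  unfolding emp_def by simp

lemma emp_le_1: "emp xs y \<le> 1"
proof (cases "xs = []")
  case False
  have "count_list xs y \<le> length xs" by (simp add: count_list_eq_length_filter)
  then show ?thesis using False unfolding emp_def by (simp add: divide_le_eq_1)
qed (simp add: emp_def)

lemma sum_emp:
  assumes "xs \<noteq> []"
  shows "(\<Sum>y\<in>UNIV. emp (xs :: 'x::finite list) y) = 1"
proof -
  have "(\<Sum>y\<in>(UNIV :: 'x set). real (count_list xs y)) = real (length xs)"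
    using sum_count_set[of xs "UNIV :: 'x set"] by (simp flip: of_nat_sum)
  then show ?thesis
    using assms unfolding emp_def by (simp flip: sum_divide_distrib)
qed

lemma Hd_nonneg: "0 \<le> Hd xs"
  unfolding Hd_def by (intro entropy_fin_nonneg emp_nonneg emp_le_1)

lemma Hd_le_ln_card: "xs \<noteq> [] \<Longrightarrow> Hd (xs :: 'x::finite list) \<le> ln (real CARD('x))"
  unfolding Hd_def by (intro entropy_fin_le_ln_card emp_nonneg sum_emp)

lemma sum_trajs_prod_pmf:
  "length ps = n \<Longrightarrow> (\<Sum>xs\<in>trajs n. \<Prod>t<n. pmf (ps ! t) (xs ! t :: 'x::finite)) = 1"
proof (induction ps arbitrary: n)
  case Nil
  then show ?case by (simp add: trajs_def)
next
  case (Cons p ps)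
  then obtain m where n: "n = Suc m" and m: "length ps = m" by auto
  have inj: "inj_on (\<lambda>(x, xs). x # xs) (UNIV \<times> trajs m)" by (auto simp: inj_on_def)
  have "(\<Sum>xs\<in>trajs n. \<Prod>t<n. pmf ((p # ps) ! t) (xs ! t :: 'x))
      = (\<Sum>x\<in>UNIV. \<Sum>xs\<in>trajs m. pmf p x * (\<Prod>t<m. pmf (ps ! t) (xs ! t)))"
    unfolding n trajs_Suc sum.reindex[OF inj] prod.lessThan_Suc_shift
    by (simp add: sum.cartesian_product case_prod_beta)
  also have "\<dots> = (\<Sum>x\<in>UNIV. pmf p x)"
    by (simp add: Cons.IH[OF m] flip: sum_distrib_left)
  also have "\<dots> = 1" by (rule sum_pmf_eq_1) auto
  finally show ?case .
qed

lemma believed_prob_nonneg: "0 \<le> believed_prob bs sts"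
  unfolding believed_prob_def by (simp add: prod_nonneg)

lemma sum_believed_prob:
  "(\<Sum>sts\<in>trajs T. believed_prob (belief_traj T bel os as) (sts :: 's::finite list)) = 1"
  using sum_trajs_prod_pmf[of "belief_traj T bel os as" T]
  unfolding believed_prob_def by (simp add: belief_traj_def)

lemma joint_prob_nonneg: "0 \<le> joint_prob M info pol ss os as"
  unfolding joint_prob_def by (intro mult_nonneg_nonneg prod_nonneg) auto

lemma state_prob_nonneg: "0 \<le> state_prob M info pol ss"
  unfolding state_prob_def by (intro sum_nonneg joint_prob_nonneg)

lemma cond_exp_affine:
  assumes "state_prob M info pol ss > 0"
  shows "cond_exp M info pol ss (\<lambda>os as. a * f os as + b) = a * cond_exp M info pol ss f + b"
proof -
  let ?j = "joint_prob M info pol ss"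
  have "(\<Sum>os\<in>trajs (hor M). \<Sum>as\<in>trajs (hor M - 1). ?j os as * (a * f os as + b))
      = a * (\<Sum>os\<in>trajs (hor M). \<Sum>as\<in>trajs (hor M - 1). ?j os as * f os as)
        + b * state_prob M info pol ss"
    unfolding state_prob_def by (simp add: algebra_simps sum.distrib sum_distrib_left)
  then show ?thesis
    using assms unfolding cond_exp_def by (simp add: field_simps)
qed

lemma cond_exp_mono:
  assumes "\<And>os as. os \<in> trajs (hor M) \<Longrightarrow> as \<in> trajs (hor M - 1) \<Longrightarrow> f os as \<le> g os as"
  shows "cond_exp M info pol ss f \<le> cond_exp M info pol ss g"
  unfolding cond_exp_def using assms
  by (intro divide_right_mono sum_mono mult_left_mono joint_prob_nonneg state_prob_nonneg) auto

text \<open>The bounds \<open>h p \<le> g \<le> L p + h (1 - p)\<close> are affine in \<open>(p, g)\<close>, so they survive averaging.\<close>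

lemma cond_exp_threshold_bounds:
  assumes sp: "state_prob M info pol ss > 0"
    and lower: "\<And>os as. os \<in> trajs (hor M) \<Longrightarrow> as \<in> trajs (hor M - 1) \<Longrightarrow> h * p os as \<le> g os as"
    and upper: "\<And>os as. os \<in> trajs (hor M) \<Longrightarrow> as \<in> trajs (hor M - 1) \<Longrightarrow>
                  g os as \<le> (L - h) * p os as + h"
  shows "h * cond_exp M info pol ss p \<le> cond_exp M info pol ss g"
    and "cond_exp M info pol ss g \<le> L * cond_exp M info pol ss p + h * (1 - cond_exp M info pol ss p)"
proof -
  have "h * cond_exp M info pol ss p = cond_exp M info pol ss (\<lambda>os as. h * p os as + 0)"
    using cond_exp_affine[OF sp, of h p 0] by simp
  also have "\<dots> \<le> cond_exp M info pol ss g"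
    using lower by (intro cond_exp_mono) auto
  finally show "h * cond_exp M info pol ss p \<le> cond_exp M info pol ss g" .
  have "cond_exp M info pol ss g \<le> cond_exp M info pol ss (\<lambda>os as. (L - h) * p os as + h)"
    using upper by (rule cond_exp_mono)
  also have "\<dots> = L * cond_exp M info pol ss p + h * (1 - cond_exp M info pol ss p)"
    unfolding cond_exp_affine[OF sp] by (simp add: algebra_simps)
  finally show "cond_exp M info pol ss g \<le> L * cond_exp M info pol ss p + h * (1 - cond_exp M info pol ss p)" .
qed

lemma sum_threshold_bounds:
  fixes w f :: "'x \<Rightarrow> real"
  assumes "finite A" and w: "\<And>x. x \<in> A \<Longrightarrow> 0 \<le> w x"
    and f: "\<And>x. x \<in> A \<Longrightarrow> 0 \<le> f x \<and> f x \<le> L"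
  shows "h * (\<Sum>x\<in>{x\<in>A. f x \<ge> h}. w x) \<le> (\<Sum>x\<in>A. w x * f x)"
    and "(\<Sum>x\<in>A. w x * f x) \<le> (L - h) * (\<Sum>x\<in>{x\<in>A. f x \<ge> h}. w x) + h * (\<Sum>x\<in>A. w x)"
proof -
  have restrict: "(\<Sum>x\<in>{x\<in>A. f x \<ge> h}. c * w x) = (\<Sum>x\<in>A. if f x \<ge> h then c * w x else 0)" for c
    using \<open>finite A\<close> by (rule sum.inter_filter)
  show "h * (\<Sum>x\<in>{x\<in>A. f x \<ge> h}. w x) \<le> (\<Sum>x\<in>A. w x * f x)"
    unfolding sum_distrib_left restrict
    using w f by (intro sum_mono) (auto simp: mult.commute mult_right_mono)
  have "(\<Sum>x\<in>A. w x * f x) \<le> (\<Sum>x\<in>A. (if f x \<ge> h then (L - h) * w x else 0) + h * w x)"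
    using w f by (intro sum_mono) (auto simp: algebra_simps intro: mult_right_mono)
  then show "(\<Sum>x\<in>A. w x * f x) \<le> (L - h) * (\<Sum>x\<in>{x\<in>A. f x \<ge> h}. w x) + h * (\<Sum>x\<in>A. w x)"
    unfolding sum_distrib_left restrict sum.distrib .
qed

lemma bounds_from_threshold_split:
  fixes h P J L :: real
  assumes "h * P \<le> J" "J \<le> L * P + h * (1 - P)" "0 < P" "P < 1"
  shows "(J - P * L) / (1 - P) \<le> h" "h \<le> J / P"
  using assms by (auto simp: field_simps)

lemma observation_threshold_bounds:
  fixes M :: "('s::finite, 'a::finite, 'o::finite) pomdp"
  assumes T_pos: "hor M > 0" and sp: "state_prob M info pol ss > 0"
  shows "Hd ss * P_TO M info pol ss \<le> J_O_cond M info pol ss"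
    and "J_O_cond M info pol ss \<le> ln (real CARD('o)) * P_TO M info pol ss + Hd ss * (1 - P_TO M info pol ss)"
proof -
  let ?above = "\<lambda>os (as :: 'a list). if Hd os \<ge> Hd ss then 1 else 0"
  have lower: "Hd ss * ?above os as \<le> Hd os" for os :: "'o list" and as
    using Hd_nonneg[of os] by simp
  have upper: "Hd os \<le> (ln (real CARD('o)) - Hd ss) * ?above os as + Hd ss"
    if "os \<in> trajs (hor M)" for os :: "'o list" and as
    using Hd_le_ln_card[OF nonempty_if_in_trajs[OF that T_pos]] by simp
  show "Hd ss * P_TO M info pol ss \<le> J_O_cond M info pol ss"
       "J_O_cond M info pol ss \<le> ln (real CARD('o)) * P_TO M info pol ss + Hd ss * (1 - P_TO M info pol ss)"
    unfolding P_TO_def J_O_cond_def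
    using cond_exp_threshold_bounds[where p = ?above and g = "\<lambda>os as. Hd os", OF sp lower upper]
    by blast+
qed

lemma belief_threshold_bounds:
  fixes M :: "('s::finite, 'a::finite, 'o::finite) pomdp"
    and bel :: "nat \<Rightarrow> 'o list \<Rightarrow> 'a list \<Rightarrow> 's pmf"
  assumes T_pos: "hor M > 0" and sp: "state_prob M info pol ss > 0"
  shows "Hd ss * pbar_S M info pol bel ss \<le> J_tilde_cond M info pol bel ss"
    and "J_tilde_cond M info pol bel ss
           \<le> ln (real CARD('s)) * pbar_S M info pol bel ss + Hd ss * (1 - pbar_S M info pol bel ss)"
proof -
  let ?b = "\<lambda>os as. believed_prob (belief_traj (hor M) bel os as)"
  let ?above = "\<lambda>os as. \<Sum>sts\<in>{sts\<in>trajs (hor M). Hd sts \<ge> Hd ss}. ?b os as sts"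
  let ?mean = "\<lambda>os as. \<Sum>sts\<in>trajs (hor M). ?b os as sts * Hd sts"
  have Hd_range: "0 \<le> Hd sts \<and> Hd sts \<le> ln (real CARD('s))" if "sts \<in> trajs (hor M)" for sts :: "'s list"
    using Hd_nonneg Hd_le_ln_card[OF nonempty_if_in_trajs[OF that T_pos]] by simp
  note split = sum_threshold_bounds[where A = "trajs (hor M)" and w = "?b os as" and f = Hd
      and h = "Hd ss" for os as, OF finite_trajs believed_prob_nonneg Hd_range]
  have lower: "Hd ss * ?above os as \<le> ?mean os as" for os as
    by (rule split(1))
  have upper: "?mean os as \<le> (ln (real CARD('s)) - Hd ss) * ?above os as + Hd ss" for os as
    using split(2) by (simp add: sum_believed_prob)
  show "Hd ss * pbar_S M info pol bel ss \<le> J_tilde_cond M info pol bel ss"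
       "J_tilde_cond M info pol bel ss
          \<le> ln (real CARD('s)) * pbar_S M info pol bel ss + Hd ss * (1 - pbar_S M info pol bel ss)"
    unfolding pbar_S_def J_tilde_cond_def
    using cond_exp_threshold_bounds[where p = ?above and g = ?mean, OF sp lower upper]
    by blast+
qed

lemma J_S_eq_E_S: "J_S M info pol = E_S M info pol Hd"
  unfolding J_S_def E_S_def
  by (rule sum.mono_neutral_right) (auto simp: less_le state_prob_nonneg)

lemma E_S_mono:
  assumes "\<And>ss. ss \<in> trajs (hor M) \<Longrightarrow> state_prob M info pol ss > 0 \<Longrightarrow> f ss \<le> g ss"
  shows "E_S M info pol f \<le> E_S M info pol g"
  unfolding E_S_def using assms by (intro sum_mono mult_left_mono) auto

theorem theorem4:
  fixes M :: "('s::finite, 'a::finite, 'o::finite) pomdp"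
    and info :: "nat \<Rightarrow> 'o list \<Rightarrow> 'a list \<Rightarrow> 'i"
    and pol :: "'i \<Rightarrow> 'a pmf"
    and bel :: "nat \<Rightarrow> 'o list \<Rightarrow> 'a list \<Rightarrow> 's pmf"
  assumes T_pos: "hor M > 0"
    and PTO_bounds: "\<And>ss. ss \<in> trajs (hor M) \<Longrightarrow> state_prob M info pol ss > 0 \<Longrightarrow>
           0 < P_TO M info pol ss \<and> P_TO M info pol ss < 1"
    and pbar_bounds: "\<And>ss. ss \<in> trajs (hor M) \<Longrightarrow> state_prob M info pol ss > 0 \<Longrightarrow>
           0 < pbar_S M info pol bel ss \<and> pbar_S M info pol bel ss < 1"
  shows "E_S M info pol (\<lambda>ss. (J_O_cond M info pol ss - P_TO M info pol ss * ln (real CARD('o)))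
                                / (1 - P_TO M info pol ss))
           \<le> J_S M info pol
         \<and> J_S M info pol \<le> E_S M info pol (\<lambda>ss. J_O_cond M info pol ss / P_TO M info pol ss)
         \<and> E_S M info pol (\<lambda>ss. (J_tilde_cond M info pol bel ss - pbar_S M info pol bel ss * ln (real CARD('s)))
                                / (1 - pbar_S M info pol bel ss))
           \<le> J_S M info pol
         \<and> J_S M info pol \<le> E_S M info pol (\<lambda>ss. J_tilde_cond M info pol bel ss / pbar_S M info pol bel ss)"
proof -
  note observed = bounds_from_threshold_split[OF observation_threshold_bounds[OF T_pos]
      PTO_bounds[THEN conjunct1] PTO_bounds[THEN conjunct2]]
  note believed = bounds_from_threshold_split[OF belief_threshold_bounds[OF T_pos]
      pbar_bounds[THEN conjunct1] pbar_bounds[THEN conjunct2]]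
  show ?thesis
    unfolding J_S_eq_E_S using observed believed by (intro conjI E_S_mono) auto
qed

end
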